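(* Let $d\ge 1$ and let $\mathcal E$ be the set of finite linear combinations $\sum_{i=1}^n c_i \mathcal E_{\xi_i}$ with $n\in\mathbb N$, $c_i\in\mathbb C$, $\xi_i\in\mathbb C^d$, where $\mathcal E_{\xi}(x)=e^{\langle \xi,x\rangle-\frac12\langle\xi,\xi\rangle}$. Let $u,v>0$ with $\frac1u+\frac1v=1$. Then for all $\varphi,\psi\in\mathcal E$ and all $x\in\mathbb R^d$, $$\Big\{[\Gamma(\sqrt u)\varphi]\big(\tfrac{\cdot}{\sqrt v}\big)e^{-\frac{\langle \cdot,\cdot\rangle}{2v}}\Big\}\star\Big\{[\Gamma(\sqrt v)\psi]\big(\tfrac{\cdot}{\sqrt u}\big)e^{-\frac{\langle \cdot,\cdot\rangle}{2u}}\Big\}(x)=(\varphi\diamond\psi)\Big(\frac{x}{\sqrt{uv}}\Big)e^{-\frac{\langle x,x\rangle}{2uv}}.$$ Consequently (replacing $\varphi,\psi$ by $\Gamma(1/\sqrt u)\varphi$, $\Gamma(1/\sqrt v)\psi$), for all $\varphi,\psi\in\mathcal E$, $$\Big[\varphi\big(\tfrac{\cdot}{\sqrt v}\big)e^{-\frac{\langle \cdot,\cdot\rangle}{2v}}\Big]\star\Big[\psi\big(\tfrac{\cdot}{\sqrt u}\big)e^{-\frac{\langle \cdot,\cdot\rangle}{2u}}\Big](x)=\Big[\Gamma\big(\tfrac{1}{\sqrt u}\big)\varphi\diamond\Gamma\big(\tfrac1{\sqrt v}\big)\psi\Big]\Big(\frac{x}{\sqrt{uv}}\Big)e^{-\frac{\langle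 x,x\rangle}{2uv}}.$$
   Context: $\langle\cdot,\cdot\rangle$ denotes the bilinear (not Hermitian) form $\langle a,b\rangle=\sum_i a_ib_i$ on $\mathbb C^d$. $d_Nx=(2\pi)^{-d/2}dx$ is the normalized Lebesgue measure on $\mathbb R^d$, and $\star$ is convolution with respect to $d_Nx$: $(F\star G)(x)=\int_{\mathbb R^d}F(x-y)G(y)\,d_Ny$. On the span $\mathcal E$ of the exponential functions, the Wick product and second quantization operators are determined by bilinearity/linearity and the rules $\mathcal E_\xi\diamond\mathcal E_\eta=\mathcal E_{\xi+\eta}$ and $\Gamma(c)\mathcal E_\xi=\mathcal E_{c\xi}$ for all $\xi,\eta\in\mathbb C^d$, $c\in\mathbb C$ (these agree with the Gaussian Wick product and second quantization operator $\Gamma(c)\sum_n f_n=\sum_n c^nf_n$ of the chaos decomposition of $L^2(\mathbb R^d,\mu)$, $\mu$ the standard Gaussian measure). *)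

theory Defs
  imports "HOL-Analysis.Analysis"
begin

text \<open>Dimension d is the cardinality of the finite index type 'n.
  Elements of the span of exponentials are represented by finite formal sums
  (lists of coefficient/frequency pairs); the Wick product and second
  quantization act on these by the defining rules.\<close>

definition bil :: "complex^('n::finite) \<Rightarrow> complex^'n \<Rightarrow> complex" where
  "bil a b = (\<Sum>i\<in>UNIV. a$i * b$i)"

definition cvec :: "real^('n::finite) \<Rightarrow> complex^'n" where
  "cvec x = (\<chi> i. complex_of_real (x$i))"

definition expf :: "complex^('n::finite) \<Rightarrow> real^'n \<Rightarrow> complex" where
  "expf \<xi> x = exp (bil \<xi> (cvec x) - bil \<xi> \<xi> / 2)"

type_synonym 'n expsum = "(complex \<times> (complex^'n)) list"

definition eval_es :: "('n::finite) expsum \<Rightarrow> real^'n \<Rightarrow> complex" where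
  "eval_es cs x = (\<Sum>(c,\<xi>)\<leftarrow>cs. c * expf \<xi> x)"

definition Gamma_es :: "complex \<Rightarrow> ('n::finite) expsum \<Rightarrow> 'n expsum" where
  "Gamma_es c cs = map (\<lambda>(a,\<xi>). (a, \<chi> i. c * \<xi>$i)) cs"

definition wick_es :: "('n::finite) expsum \<Rightarrow> ('n::finite) expsum \<Rightarrow> 'n expsum" where
  "wick_es cs ds = [(a * b, \<xi> + \<eta>). (a,\<xi>) \<leftarrow> cs, (b,\<eta>) \<leftarrow> ds]"

text \<open>Convolution w.r.t. the normalized Lebesgue measure (2 pi)^(-d/2) dx.\<close>
definition convN :: "(real^('n::finite) \<Rightarrow> complex) \<Rightarrow> (real^'n \<Rightarrow> complex) \<Rightarrow> real^'n \<Rightarrow> complex" where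
  "convN F G x = complex_of_real ((2*pi) powr (- real CARD('n) / 2)) *
      (\<integral>y. F (x - y) * G y \<partial>lborel)"

end

theory Submission
  imports Defs "HOL-Probability.Probability"
begin

text \<open>
  Both sides are linear in each argument, so it suffices to treat single
  exponentials \<open>\<E>\<^sub>\<xi>\<close>, \<open>\<E>\<^sub>\<eta>\<close>.  For these the integrand of the convolution is
  \<open>exp(K) \<cdot> exp(\<langle>w,y\<rangle> - |y|\<^sup>2/2)\<close> for a constant \<open>K\<close> and a complex vector \<open>w\<close>
  (completing the square, using \<open>1/u + 1/v = 1\<close>), and the complex Gaussian
  integral \<open>\<integral> exp(\<langle>w,y\<rangle> - |y|\<^sup>2/2) dy = (2\<pi>)\<^bsup>d/2\<^esup> exp(\<langle>w,w\<rangle>/2)\<close> turns this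
  into the right-hand side.

  The second formula of the theorem is the first one applied to
  \<open>\<Gamma>(1/\<surd>u)\<phi>\<close> and \<open>\<Gamma>(1/\<surd>v)\<psi>\<close>, since \<open>\<Gamma>(c)\<Gamma>(1/c) = id\<close>.
\<close>

section \<open>Complex Gaussian integrals\<close>

text \<open>The Fourier transform of \<open>e\<^sup>-\<^sup>s\<^sup>\<^sup>2\<^sup>/\<^sup>2\<close>, read off from the characteristic
  function of the standard normal distribution.\<close>
lemma gaussian_fourier_integral:
  fixes b :: real
  shows "has_bochner_integral lborel (\<lambda>s. complex_of_real (exp (- s\<^sup>2/2)) * iexp (b * s))
           (complex_of_real (sqrt (2*pi)) * complex_of_real (exp (- b\<^sup>2/2)))"
proof -
  interpret real_distribution std_normal_distribution by (rule real_dist_normal_dist)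
  have "integrable std_normal_distribution (\<lambda>s. iexp (b * s))"
    by (rule integrable_iexp) auto
  then have int: "integrable lborel (\<lambda>s. std_normal_density s *\<^sub>R iexp (b * s))"
    by (subst (asm) integrable_density) auto
  have val: "(\<integral>s. std_normal_density s *\<^sub>R iexp (b * s) \<partial>lborel) = complex_of_real (exp (- b\<^sup>2/2))"
    using char_std_normal_distribution[THEN fun_cong, of b]
    unfolding char_def by (subst (asm) integral_density) auto
  have eq: "(\<lambda>s. complex_of_real (exp (- s\<^sup>2/2)) * iexp (b * s)) =
     (\<lambda>s. complex_of_real (sqrt (2*pi)) * (std_normal_density s *\<^sub>R iexp (b * s)))"
    by (auto simp: std_normal_density_def scaleR_conv_of_real fun_eq_iff)
  show ?thesis unfolding eq
    by (rule has_bochner_integral_mult_right) (use int val in \<open>metis has_bochner_integral_integrable\<close>)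
qed

text \<open>The real part of \<open>c\<close> is removed
  by the translation \<open>t = Re c + s\<close>, the imaginary part is a Fourier frequency.\<close>
lemma gaussian_integral_complex:
  fixes c :: complex
  shows "has_bochner_integral lborel (\<lambda>t::real. exp (c * of_real t - of_real (t\<^sup>2) / 2))
           (complex_of_real (sqrt (2*pi)) * exp (c\<^sup>2 / 2))"
proof -
  define a where "a = Re c"
  define b where "b = Im c"
  have c: "c = of_real a + \<i> * of_real b" by (simp add: a_def b_def complex_eq)
  define F where "F = (\<lambda>t::real. exp (c * of_real t - of_real (t\<^sup>2) / 2))"
  define K where "K = exp (of_real (a\<^sup>2/2) + \<i> * of_real (a*b))"
  have shifted: "F (a + 1 * s) = K * (complex_of_real (exp (- s\<^sup>2/2)) * iexp (b * s))" for s
  proof -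
    have "c * of_real (a + 1 * s) - of_real ((a + 1 * s)\<^sup>2) / 2
        = (of_real (a\<^sup>2/2) + \<i> * of_real (a*b)) + (of_real (- s\<^sup>2/2) + \<i> * of_real (b * s))"
      unfolding c by (simp add: power2_eq_square field_simps)
    then show ?thesis
      unfolding F_def K_def by (simp only: exp_add exp_of_real of_real_mult)
  qed
  have h: "has_bochner_integral lborel (\<lambda>s. F (a + 1 * s))
       (K * (complex_of_real (sqrt (2*pi)) * complex_of_real (exp (- b\<^sup>2/2))))"
    unfolding shifted by (intro has_bochner_integral_mult_right gaussian_fourier_integral)
  have int: "integrable lborel F"
    using h[unfolded has_bochner_integral_iff] lborel_integrable_real_affine_iff[of 1 F a] by simp
  have "integral\<^sup>L lborel F = (\<integral>s. F (a + 1 * s) \<partial>lborel)"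
    using lborel_integral_real_affine[of 1 F a] by simp
  also have "\<dots> = K * (complex_of_real (sqrt (2*pi)) * complex_of_real (exp (- b\<^sup>2/2)))"
    using h by (simp add: has_bochner_integral_integral_eq)
  also have "\<dots> = complex_of_real (sqrt (2*pi)) * exp (c\<^sup>2 / 2)"
  proof -
    have "c\<^sup>2/2 = (of_real (a\<^sup>2/2) + \<i> * of_real (a*b)) + of_real (- b\<^sup>2/2)"
      unfolding c by (simp add: power2_eq_square field_simps)
    then show ?thesis unfolding K_def by (simp only: exp_add exp_of_real mult_ac)
  qed
  finally show ?thesis using int unfolding F_def by (simp add: has_bochner_integral_iff)
qed

lemma has_bochner_integral_lborel_prod_Basis:
  fixes f :: "'a::euclidean_space \<Rightarrow> real \<Rightarrow> complex"
  assumes h: "\<And>b. b \<in> Basis \<Longrightarrow> has_bochner_integral lborel (f b) (I b)"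
  shows "has_bochner_integral lborel (\<lambda>x::'a. \<Prod>b\<in>Basis. f b (x \<bullet> b)) (\<Prod>b\<in>Basis. I b)"
proof -
  interpret product_sigma_finite "\<lambda>_. lborel" by standard
  have int: "\<And>b. b \<in> Basis \<Longrightarrow> integrable lborel (f b)"
    and val: "\<And>b. b \<in> Basis \<Longrightarrow> integral\<^sup>L lborel (f b) = I b"
    using h by (simp_all add: has_bochner_integral_iff)
  have meas: "f b \<in> borel_measurable borel" if "b \<in> Basis" for b
    using int[OF that] borel_measurable_integrable by simp
  have product: "has_bochner_integral (\<Pi>\<^sub>M b\<in>Basis. lborel) (\<lambda>x. \<Prod>b\<in>Basis. f b (x b)) (\<Prod>b\<in>Basis. I b)"
    using product_integrable_prod[of Basis f] product_integral_prod[of Basis f] int val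
    by (simp add: has_bochner_integral_iff)
  have eq: "(\<lambda>x. \<Prod>b\<in>Basis. f b (x b)) = (\<lambda>x. (\<lambda>y::'a. \<Prod>b\<in>Basis. f b (y \<bullet> b)) (\<Sum>b'\<in>Basis. x b' *\<^sub>R b'))"
    by (auto intro!: prod.cong simp: inner_sum_left_Basis)
  have m1: "(\<lambda>y::'a. \<Prod>b\<in>Basis. f b (y \<bullet> b)) \<in> borel_measurable borel"
    using meas by (intro borel_measurable_prod) (auto intro: measurable_compose[OF borel_measurable_inner])
  have m2: "(\<lambda>x. \<Sum>b'\<in>Basis. x b' *\<^sub>R b') \<in> measurable (\<Pi>\<^sub>M b\<in>Basis. lborel) (borel :: 'a measure)"
    by measurable
  show ?thesis
    by (subst lborel_eq, rule has_bochner_integral_distr[OF m1 m2]) (simp only: eq[symmetric] product)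
qed

lemma prod_Basis_vec_real:
  "(\<Prod>b\<in>(Basis :: (real^'n::finite) set). F b) = (\<Prod>i\<in>UNIV. F (axis i 1))"
proof -
  have Basis: "(Basis :: (real^'n) set) = range (\<lambda>i. axis i 1)"
    by (auto simp: Basis_vec_def)
  have "inj (\<lambda>i::'n. axis i (1::real))" by (auto simp: inj_def axis_eq_axis)
  then show ?thesis unfolding Basis by (simp add: prod.reindex)
qed

lemma gaussian_integral_vec:
  fixes w :: "complex^'n::finite"
  shows "has_bochner_integral lborel (\<lambda>y::real^'n. exp (bil w (cvec y) - of_real (y \<bullet> y) / 2))
           (of_real (sqrt (2*pi) ^ CARD('n)) * exp (bil w w / 2))"
proof -
  define W where "W b = bil w (cvec b)" for b :: "real^'n"
  have W_axis: "W (axis i 1) = w $ i" for i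
    unfolding W_def bil_def cvec_def axis_def by (simp add: if_distrib cong: if_cong)
  have integrand: "(\<Prod>b\<in>Basis. exp (W b * of_real (y \<bullet> b) - of_real ((y \<bullet> b)\<^sup>2) / 2))
        = exp (bil w (cvec y) - of_real (y \<bullet> y) / 2)" for y :: "real^'n"
  proof -
    have "(\<Prod>b\<in>Basis. exp (W b * of_real (y \<bullet> b) - of_real ((y \<bullet> b)\<^sup>2) / 2))
        = (\<Prod>i\<in>UNIV. exp (w $ i * of_real (y $ i) - of_real ((y $ i)\<^sup>2) / 2))"
      by (simp add: prod_Basis_vec_real W_axis inner_axis)
    also have "\<dots> = exp (\<Sum>i\<in>UNIV. w $ i * of_real (y $ i) - of_real ((y $ i)\<^sup>2) / 2)"
      by (simp add: exp_sum)
    also have "(\<Sum>i\<in>UNIV. w $ i * of_real (y $ i) - of_real ((y $ i)\<^sup>2) / 2)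
       = bil w (cvec y) - of_real (y \<bullet> y) / 2"
      by (simp add: bil_def cvec_def inner_vec_def sum_subtractf sum_divide_distrib power2_eq_square)
    finally show ?thesis .
  qed
  have total: "(\<Prod>b\<in>(Basis :: (real^'n) set). complex_of_real (sqrt (2*pi)) * exp ((W b)\<^sup>2 / 2))
      = of_real (sqrt (2*pi) ^ CARD('n)) * exp (bil w w / 2)"
  proof -
    have "(\<Prod>b\<in>(Basis :: (real^'n) set). complex_of_real (sqrt (2*pi)) * exp ((W b)\<^sup>2 / 2))
       = (\<Prod>i\<in>UNIV. complex_of_real (sqrt (2*pi)) * exp ((w $ i)\<^sup>2 / 2))"
      by (simp add: prod_Basis_vec_real W_axis)
    also have "\<dots> = of_real (sqrt (2*pi) ^ CARD('n)) * exp (\<Sum>i\<in>UNIV. (w $ i)\<^sup>2 / 2)"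
      by (simp add: prod.distrib exp_sum)
    also have "(\<Sum>i\<in>UNIV. (w $ i)\<^sup>2 / 2) = bil w w / 2"
      by (simp add: bil_def sum_divide_distrib power2_eq_square)
    finally show ?thesis .
  qed
  show ?thesis
    using has_bochner_integral_lborel_prod_Basis[OF gaussian_integral_complex, of W]
    unfolding integrand total .
qed

lemma bil_add_left: "bil (a + b) c = bil a c + bil b c"
  by (simp add: bil_def sum.distrib algebra_simps)
lemma bil_add_right: "bil a (b + c) = bil a b + bil a c"
  by (simp add: bil_def sum.distrib algebra_simps)
lemma bil_diff_left: "bil (a - b) c = bil a c - bil b c"
  by (simp add: bil_def sum_subtractf algebra_simps)
lemma bil_diff_right: "bil a (b - c) = bil a b - bil a c"
  by (simp add: bil_def sum_subtractf algebra_simps)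
lemma bil_scale_left: "bil (k *s a) c = k * bil a c"
  by (simp add: bil_def sum_distrib_left algebra_simps)
lemma bil_scale_right: "bil a (k *s c) = k * bil a c"
  by (simp add: bil_def sum_distrib_left algebra_simps)
lemma bil_comm: "bil a b = bil b a"
  by (simp add: bil_def mult.commute)
lemma cvec_diff: "cvec (x - y) = cvec x - cvec y"
  by (simp add: cvec_def vec_eq_iff)
lemma cvec_scale: "cvec (r *\<^sub>R x) = of_real r *s cvec x"
  by (simp add: cvec_def vec_eq_iff)
lemma bil_cvec: "bil (cvec x) (cvec y) = of_real (x \<bullet> y)"
  by (simp add: bil_def cvec_def inner_vec_def)

lemmas bil_simps = bil_add_left bil_add_right bil_diff_left bil_diff_right
  bil_scale_left bil_scale_right cvec_diff cvec_scale bil_cvec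

section \<open>The identity for single exponentials\<close>

lemma reciprocal_squares_complex:
  fixes s t :: real
  assumes "1/s\<^sup>2 + 1/t\<^sup>2 = 1"
  shows "1/(complex_of_real s)\<^sup>2 = 1 - 1/(complex_of_real t)\<^sup>2"
proof -
  have "1/s\<^sup>2 = 1 - 1/t\<^sup>2" using assms by simp
  then have "complex_of_real (1/s\<^sup>2) = complex_of_real (1 - 1/t\<^sup>2)" by simp
  then show ?thesis by simp
qed

definition gauss_weight :: "real \<Rightarrow> (real^'n::finite \<Rightarrow> complex) \<Rightarrow> real^'n \<Rightarrow> complex" where
  "gauss_weight a F z = F ((1 / sqrt a) *\<^sub>R z) * complex_of_real (exp (- (z \<bullet> z) / (2 * a)))"

text \<open>Completing the square: with \<open>s = \<surd>u\<close>, \<open>t = \<surd>v\<close> the convolution integrand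
  of two weighted exponentials is a constant times a complex Gaussian in \<open>y\<close>.
  The relation \<open>1/s\<^sup>2 = 1 - 1/t\<^sup>2\<close> makes the coefficient of \<open>|y|\<^sup>2\<close> equal to \<open>-1/2\<close>.\<close>
lemma convolution_integrand_expf:
  fixes s t :: real and \<xi> \<eta> :: "complex^'n::finite" and x y :: "real^'n"
  assumes s: "s > 0" and t: "t > 0" and st: "1/s\<^sup>2 + 1/t\<^sup>2 = 1"
  defines "w \<equiv> (1/of_real (t\<^sup>2)) *s cvec x - (of_real s/of_real t) *s \<xi> + (of_real t / of_real s) *s \<eta>"
  defines "K \<equiv> (of_real s/of_real t) * bil \<xi> (cvec x) - of_real (s\<^sup>2) * bil \<xi> \<xi> / 2
              - of_real (x \<bullet> x) / (2 * of_real (t\<^sup>2)) - of_real (t\<^sup>2) * bil \<eta> \<eta> / 2"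
  shows "gauss_weight (t\<^sup>2) (expf (of_real s *s \<xi>)) (x - y) * gauss_weight (s\<^sup>2) (expf (of_real t *s \<eta>)) y
       = exp K * exp (bil w (cvec y) - of_real (y \<bullet> y) / 2)"
proof -
  note st' = reciprocal_squares_complex[OF st]
  have split_weight: "- (Y / (2 * (complex_of_real s)\<^sup>2)) = Y / (2 * (complex_of_real t)\<^sup>2) - Y / 2"
    for Y :: complex
  proof -
    have "- (Y / (2 * (complex_of_real s)\<^sup>2)) = - (Y/2) * (1/(complex_of_real s)\<^sup>2)" by simp
    also have "\<dots> = Y / (2 * (complex_of_real t)\<^sup>2) - Y / 2" unfolding st' by (simp add: algebra_simps)
    finally show ?thesis .
  qed
  have "gauss_weight (t\<^sup>2) (expf (of_real s *s \<xi>)) (x - y) * gauss_weight (s\<^sup>2) (expf (of_real t *s \<eta>)) y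
     = exp ((bil (of_real s *s \<xi>) (cvec ((1/t) *\<^sub>R (x - y))) - bil (of_real s *s \<xi>) (of_real s *s \<xi>) / 2)
          + of_real (- ((x-y) \<bullet> (x-y)) / (2 * t\<^sup>2))
          + ((bil (of_real t *s \<eta>) (cvec ((1/s) *\<^sub>R y)) - bil (of_real t *s \<eta>) (of_real t *s \<eta>) / 2)
          + of_real (- (y \<bullet> y) / (2 * s\<^sup>2))))"
    using s t unfolding gauss_weight_def expf_def by (simp only: exp_add exp_of_real real_sqrt_abs abs_of_pos)
  also have "\<dots> = exp (K + (bil w (cvec y) - of_real (y \<bullet> y) / 2))"
  proof (rule arg_cong[where f=exp])
    show "(bil (of_real s *s \<xi>) (cvec ((1/t) *\<^sub>R (x - y))) - bil (of_real s *s \<xi>) (of_real s *s \<xi>) / 2)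
          + of_real (- ((x-y) \<bullet> (x-y)) / (2 * t\<^sup>2))
          + ((bil (of_real t *s \<eta>) (cvec ((1/s) *\<^sub>R y)) - bil (of_real t *s \<eta>) (of_real t *s \<eta>) / 2)
          + of_real (- (y \<bullet> y) / (2 * s\<^sup>2))) = K + (bil w (cvec y) - of_real (y \<bullet> y) / 2)"
      unfolding w_def K_def
      apply (simp add: bil_simps inner_diff_left inner_diff_right inner_commute[of y x])
      apply (simp only: split_weight)
      using s t by (simp add: field_simps power2_eq_square)
  qed
  finally show ?thesis by (simp only: exp_add)
qed

text \<open>The scalar identity behind the next lemma, with \<open>A = \<langle>\<xi>,x\<rangle>\<close>, \<open>B = \<langle>\<eta>,x\<rangle>\<close>,
  \<open>P = \<langle>\<xi>,\<xi>\<rangle>\<close>, \<open>Q = \<langle>\<eta>,\<eta>\<rangle>\<close>, \<open>R = \<langle>\<xi>,\<eta>\<rangle>\<close>, \<open>X = \<langle>x,x\<rangle>\<close>.\<close>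
lemma completed_square_identity:
  fixes S T A B P Q R X :: complex
  assumes "S \<noteq> 0" "T \<noteq> 0" "1/S\<^sup>2 = 1 - 1/T\<^sup>2"
  shows "S * A / T - S\<^sup>2 * P / 2 - X / (2 * T\<^sup>2) - T\<^sup>2 * Q / 2 +
     ((X / T\<^sup>2 - S * A / T + T * B / S) / T\<^sup>2 - S * (A / T\<^sup>2 - S * P / T + T * R / S) / T
      + T * (B / T\<^sup>2 - S * R / T + T * Q / S) / S) / 2
   = (A + B) / (S * T) - (2 * R + (P + Q)) / 2 - X / (2 * S\<^sup>2 * T\<^sup>2)"
proof -
  have c: "T\<^sup>2 = S\<^sup>2 * T\<^sup>2 - S\<^sup>2" using assms by (simp add: field_simps)
  show ?thesis using assms(1,2)
    apply (simp add: field_simps)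
    apply (simp add: power2_eq_square algebra_simps)
    using c unfolding power2_eq_square by algebra
qed

text \<open>The constant left after the Gaussian integration of the previous integrand:
  \<open>exp(K + \<langle>w,w\<rangle>/2)\<close> is the weighted exponential of frequency \<open>\<xi> + \<eta>\<close> at scale
  \<open>s\<^sup>2t\<^sup>2 = uv\<close>, i.e. the weighted \<open>\<E>\<^sub>\<xi> \<diamond> \<E>\<^sub>\<eta>\<close>.\<close>
lemma completed_square_value:
  fixes s t :: real and \<xi> \<eta> :: "complex^'n::finite" and x :: "real^'n"
  assumes s: "s > 0" and t: "t > 0" and st: "1/s\<^sup>2 + 1/t\<^sup>2 = 1"
  defines "w \<equiv> (1/of_real (t\<^sup>2)) *s cvec x - (of_real s/of_real t) *s \<xi> + (of_real t / of_real s) *s \<eta>"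
  defines "K \<equiv> (of_real s/of_real t) * bil \<xi> (cvec x) - of_real (s\<^sup>2) * bil \<xi> \<xi> / 2
              - of_real (x \<bullet> x) / (2 * of_real (t\<^sup>2)) - of_real (t\<^sup>2) * bil \<eta> \<eta> / 2"
  shows "exp K * exp (bil w w / 2) = gauss_weight (s\<^sup>2 * t\<^sup>2) (expf (\<xi> + \<eta>)) x"
proof -
  have "K + bil w w / 2 = (bil (\<xi> + \<eta>) (cvec ((1/(s*t)) *\<^sub>R x)) - bil (\<xi> + \<eta>) (\<xi> + \<eta>) / 2)
      + of_real (- (x \<bullet> x) / (2 * s\<^sup>2 * t\<^sup>2))"
    unfolding w_def K_def
    apply (simp add: bil_simps bil_comm[of "cvec x"] bil_comm[of \<eta> \<xi>])
    apply (rule completed_square_identity)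
    using s t reciprocal_squares_complex[OF st] by auto
  moreover have "gauss_weight (s\<^sup>2 * t\<^sup>2) (expf (\<xi> + \<eta>)) x
      = expf (\<xi> + \<eta>) ((1/(s*t)) *\<^sub>R x) * of_real (exp (- (x \<bullet> x) / (2 * s\<^sup>2 * t\<^sup>2)))"
    using s t by (simp add: gauss_weight_def real_sqrt_mult mult.assoc)
  ultimately show ?thesis
    unfolding expf_def by (simp only: exp_add[symmetric] exp_of_real[symmetric])
qed

text \<open>Lemma 3.2 for single exponentials: the convolution integrand of
  \<open>\<Gamma>(\<surd>u)\<E>\<^sub>\<xi>\<close> and \<open>\<Gamma>(\<surd>v)\<E>\<^sub>\<eta>\<close> (weighted as in the theorem) integrates to
  \<open>(2\<pi>)\<^bsup>d/2\<^esup>\<close> times the weighted \<open>\<E>\<^sub>\<xi>\<^sub>+\<^sub>\<eta> = \<E>\<^sub>\<xi> \<diamond> \<E>\<^sub>\<eta>\<close>.\<close>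
lemma convolution_expf:
  fixes u v :: real and \<xi> \<eta> :: "complex^'n::finite" and x :: "real^'n"
  assumes u: "u > 0" and v: "v > 0" and uv: "1/u + 1/v = 1"
  shows "has_bochner_integral lborel
           (\<lambda>y. gauss_weight v (expf (of_real (sqrt u) *s \<xi>)) (x - y)
              * gauss_weight u (expf (of_real (sqrt v) *s \<eta>)) y)
           (of_real (sqrt (2*pi) ^ CARD('n)) * gauss_weight (u * v) (expf (\<xi> + \<eta>)) x)"
proof -
  define s t where "s = sqrt u" and "t = sqrt v"
  have s: "s > 0" and t: "t > 0" and u_eq: "u = s\<^sup>2" and v_eq: "v = t\<^sup>2"
    using u v by (simp_all add: s_def t_def)
  have st: "1/s\<^sup>2 + 1/t\<^sup>2 = 1" using uv by (simp add: u_eq v_eq)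
  show ?thesis
    unfolding s_def[symmetric] t_def[symmetric]
    unfolding u_eq v_eq convolution_integrand_expf[OF s t st] completed_square_value[OF s t st, symmetric]
    by (subst mult.left_commute[of "complex_of_real (sqrt (2*pi) ^ CARD('n))"])
       (intro has_bochner_integral_mult_right gaussian_integral_vec)
qed

section \<open>Extension to exponential sums by linearity\<close>

lemma has_bochner_integral_sum_list:
  fixes f :: "'i \<Rightarrow> 'a \<Rightarrow> 'b::{banach, second_countable_topology}"
  assumes "\<And>p. p \<in> set xs \<Longrightarrow> has_bochner_integral M (f p) (I p)"
  shows "has_bochner_integral M (\<lambda>y. \<Sum>p\<leftarrow>xs. f p y) (\<Sum>p\<leftarrow>xs. I p)"
  using assms by (induction xs) (simp_all add: has_bochner_integral_zero has_bochner_integral_add)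

lemma sum_list_mult_sum_list:
  fixes f g :: "_ \<Rightarrow> 'a::semiring_0"
  shows "(\<Sum>p\<leftarrow>xs. f p) * (\<Sum>q\<leftarrow>ys. g q) = (\<Sum>p\<leftarrow>xs. \<Sum>q\<leftarrow>ys. f p * g q)"
  by (induction xs) (simp_all add: sum_list_const_mult distrib_right)

lemma eval_es_Gamma_es: "eval_es (Gamma_es c cs) z = (\<Sum>p\<leftarrow>cs. fst p * expf (c *s snd p) z)"
  by (induction cs) (auto simp: eval_es_def Gamma_es_def vector_scalar_mult_def)

lemma eval_es_wick_es:
  "eval_es (wick_es cs ds) z = (\<Sum>p\<leftarrow>cs. \<Sum>q\<leftarrow>ds. (fst p * fst q) * expf (snd p + snd q) z)"
proof (induction cs)
  case Nil then show ?case by (simp add: eval_es_def wick_es_def)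
next
  case (Cons a cs)
  have "wick_es (a # cs) ds = map (\<lambda>q. (fst a * fst q, snd a + snd q)) ds @ wick_es cs ds"
    by (cases a) (simp add: wick_es_def split_def)
  moreover have "eval_es (map (\<lambda>q. (fst a * fst q, snd a + snd q)) ds) z
      = (\<Sum>q\<leftarrow>ds. (fst a * fst q) * expf (snd a + snd q) z)"
    by (induction ds) (auto simp: eval_es_def)
  ultimately show ?case using Cons by (simp add: eval_es_def)
qed

lemma gauss_weight_Gamma_es:
  "gauss_weight a (eval_es (Gamma_es c cs)) z = (\<Sum>p\<leftarrow>cs. fst p * gauss_weight a (expf (c *s snd p)) z)"
  by (simp add: gauss_weight_def eval_es_Gamma_es sum_list_mult_const[symmetric] mult.assoc)

lemma gauss_weight_wick_es:
  "gauss_weight a (eval_es (wick_es cs ds)) z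
     = (\<Sum>p\<leftarrow>cs. \<Sum>q\<leftarrow>ds. (fst p * fst q) * gauss_weight a (expf (snd p + snd q)) z)"
  by (simp add: gauss_weight_def eval_es_wick_es sum_list_mult_const[symmetric] mult.assoc)

lemma convolution_expsum:
  fixes u v :: real and \<phi> \<psi> :: "'n::finite expsum" and x :: "real^'n"
  assumes u: "u > 0" and v: "v > 0" and uv: "1/u + 1/v = 1"
  shows "has_bochner_integral lborel
           (\<lambda>y. gauss_weight v (eval_es (Gamma_es (of_real (sqrt u)) \<phi>)) (x - y)
              * gauss_weight u (eval_es (Gamma_es (of_real (sqrt v)) \<psi>)) y)
           (of_real (sqrt (2*pi) ^ CARD('n)) * gauss_weight (u * v) (eval_es (wick_es \<phi> \<psi>)) x)"
proof -
  define J where "J \<xi> \<eta> y = gauss_weight v (expf (of_real (sqrt u) *s \<xi>)) (x - y)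
      * gauss_weight u (expf (of_real (sqrt v) *s \<eta>)) y" for \<xi> \<eta> y
  have integrand: "gauss_weight v (eval_es (Gamma_es (of_real (sqrt u)) \<phi>)) (x - y)
      * gauss_weight u (eval_es (Gamma_es (of_real (sqrt v)) \<psi>)) y
      = (\<Sum>p\<leftarrow>\<phi>. \<Sum>q\<leftarrow>\<psi>. (fst p * fst q) * J (snd p) (snd q) y)" for y
    unfolding gauss_weight_Gamma_es sum_list_mult_sum_list J_def by (simp add: mult_ac)
  have total: "of_real (sqrt (2*pi) ^ CARD('n)) * gauss_weight (u * v) (eval_es (wick_es \<phi> \<psi>)) x
      = (\<Sum>p\<leftarrow>\<phi>. \<Sum>q\<leftarrow>\<psi>. (fst p * fst q)
           * (of_real (sqrt (2*pi) ^ CARD('n)) * gauss_weight (u * v) (expf (snd p + snd q)) x))"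
    unfolding gauss_weight_wick_es by (simp add: sum_list_const_mult[symmetric] mult_ac)
  show ?thesis
    unfolding integrand total J_def
    by (intro has_bochner_integral_sum_list has_bochner_integral_mult_right convolution_expf[OF u v uv])
qed

lemma normalization_constant: "(2*pi) powr (- real d / 2) * sqrt (2*pi) ^ d = 1"
proof -
  have "sqrt (2*pi) ^ d = ((2*pi) powr (1/2)) powr real d"
    by (simp add: powr_realpow powr_half_sqrt)
  also have "\<dots> = (2*pi) powr (real d / 2)" by (simp add: powr_powr)
  finally show ?thesis by (simp add: powr_add[symmetric])
qed

lemma convN_from_integral:
  fixes F G :: "real^'n::finite \<Rightarrow> complex"
  assumes "has_bochner_integral lborel (\<lambda>y. F (x - y) * G y) (of_real (sqrt (2*pi) ^ CARD('n)) * R)"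
  shows "integrable lborel (\<lambda>y. F (x - y) * G y) \<and> convN F G x = R"
proof -
  have "integral\<^sup>L lborel (\<lambda>y. F (x - y) * G y) = complex_of_real (sqrt (2*pi) ^ CARD('n)) * R"
    using assms by (simp add: has_bochner_integral_iff)
  then have "convN F G x
      = complex_of_real ((2*pi) powr (- real CARD('n) / 2) * sqrt (2*pi) ^ CARD('n)) * R"
    unfolding convN_def by (simp only: of_real_mult mult.assoc)
  also have "\<dots> = R" by (simp only: normalization_constant) simp
  finally show ?thesis using assms by (simp add: has_bochner_integral_iff)
qed

lemma weighted_convolution_identity:
  fixes u v :: real and \<phi> \<psi> :: "'n::finite expsum" and x :: "real^'n"
  assumes "u > 0" and "v > 0" and "1/u + 1/v = 1"
  shows "integrable lborel (\<lambda>y. gauss_weight v (eval_es (Gamma_es (of_real (sqrt u)) \<phi>)) (x - y)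
              * gauss_weight u (eval_es (Gamma_es (of_real (sqrt v)) \<psi>)) y)
    \<and> convN (gauss_weight v (eval_es (Gamma_es (of_real (sqrt u)) \<phi>)))
            (gauss_weight u (eval_es (Gamma_es (of_real (sqrt v)) \<psi>))) x
      = gauss_weight (u * v) (eval_es (wick_es \<phi> \<psi>)) x"
  by (rule convN_from_integral[OF convolution_expsum[OF assms]])

lemma Gamma_es_inverse: "c \<noteq> 0 \<Longrightarrow> Gamma_es (of_real c) (Gamma_es (of_real (1/c)) cs) = cs"
  by (induction cs) (auto simp: Gamma_es_def)

theorem lemma3p2:
  fixes u v :: real
  assumes "u > 0" and "v > 0" and "1/u + 1/v = 1"
  shows "(\<forall>(\<phi>::'n::finite expsum) \<psi> (x::real^'n).
      integrable lborel (\<lambda>y. (\<lambda>z. eval_es (Gamma_es (complex_of_real (sqrt u)) \<phi>) ((1 / sqrt v) *\<^sub>R z)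
                        * complex_of_real (exp (- (z \<bullet> z) / (2 * v)))) (x - y)
                   * (\<lambda>z. eval_es (Gamma_es (complex_of_real (sqrt v)) \<psi>) ((1 / sqrt u) *\<^sub>R z)
                        * complex_of_real (exp (- (z \<bullet> z) / (2 * u)))) y)
    \<and> convN (\<lambda>z. eval_es (Gamma_es (complex_of_real (sqrt u)) \<phi>) ((1 / sqrt v) *\<^sub>R z)
                    * complex_of_real (exp (- (z \<bullet> z) / (2 * v))))
            (\<lambda>z. eval_es (Gamma_es (complex_of_real (sqrt v)) \<psi>) ((1 / sqrt u) *\<^sub>R z)
                    * complex_of_real (exp (- (z \<bullet> z) / (2 * u)))) x
      = eval_es (wick_es \<phi> \<psi>) ((1 / sqrt (u * v)) *\<^sub>R x) * complex_of_real (exp (- (x \<bullet> x) / (2 * u * v)))) \<and>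
    (\<forall>(\<phi>::'n::finite expsum) \<psi> (x::real^'n).
      integrable lborel (\<lambda>y. (\<lambda>z. eval_es \<phi> ((1 / sqrt v) *\<^sub>R z)
                        * complex_of_real (exp (- (z \<bullet> z) / (2 * v)))) (x - y)
                   * (\<lambda>z. eval_es \<psi> ((1 / sqrt u) *\<^sub>R z)
                        * complex_of_real (exp (- (z \<bullet> z) / (2 * u)))) y)
    \<and> convN (\<lambda>z. eval_es \<phi> ((1 / sqrt v) *\<^sub>R z) * complex_of_real (exp (- (z \<bullet> z) / (2 * v))))
            (\<lambda>z. eval_es \<psi> ((1 / sqrt u) *\<^sub>R z) * complex_of_real (exp (- (z \<bullet> z) / (2 * u)))) x
      = eval_es (wick_es (Gamma_es (complex_of_real (1 / sqrt u)) \<phi>) (Gamma_es (complex_of_real (1 / sqrt v)) \<psi>))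
          ((1 / sqrt (u * v)) *\<^sub>R x) * complex_of_real (exp (- (x \<bullet> x) / (2 * u * v))))"
proof -
  have inverse: "Gamma_es (of_real (sqrt a)) (Gamma_es (of_real (1 / sqrt a)) cs) = cs"
    if "a > 0" for a and cs :: "'n expsum"
    by (rule Gamma_es_inverse) (use that in simp)
  have rescaled: "integrable lborel (\<lambda>y. gauss_weight v (eval_es \<phi>) (x - y) * gauss_weight u (eval_es \<psi>) y)
      \<and> convN (gauss_weight v (eval_es \<phi>)) (gauss_weight u (eval_es \<psi>)) x
        = gauss_weight (u * v) (eval_es (wick_es (Gamma_es (of_real (1 / sqrt u)) \<phi>)
                                                 (Gamma_es (of_real (1 / sqrt v)) \<psi>))) x"
    for \<phi> \<psi> :: "'n expsum" and x :: "real^'n"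
    using weighted_convolution_identity[OF assms, where x=x
        and \<phi>="Gamma_es (of_real (1 / sqrt u)) \<phi>" and \<psi>="Gamma_es (of_real (1 / sqrt v)) \<psi>"]
    unfolding inverse[OF \<open>u > 0\<close>] inverse[OF \<open>v > 0\<close>] .
  show ?thesis
    using weighted_convolution_identity[OF assms] rescaled unfolding gauss_weight_def mult.assoc by blast
qed

end
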